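(* For every simple graph $G$ of order $n$, \[ \frac{n}{n - y(G) + 1} < \phi(G) + \frac{1}{3}. \]
   Context: Let $G$ have degrees $d_1 \ge \dots \ge d_n$. The number $y=y(G)$ is the unique real number $1 \le y \le n$ satisfying \[ y(y-1) = \sum_{k=1}^{\lfloor y \rfloor} d_k + (y - \lfloor y \rfloor)\, d_{\lceil y \rceil}. \] $\phi(G)$ is the smallest integer $r$ for which the vertex set has a partition $V(G) = V_1 \cup \dots \cup V_r$ into $r$ parts such that, writing $n_i = |V_i|$, every vertex $v \in V_i$ has degree $d(v) \le n - n_i$, for all $i = 1,\dots,r$. (It is known that $\phi(G)\le\omega(G)$, the clique number.) *)

theory Defs
  imports Complex_Main "HOL-Library.Multiset" "HOL-Library.Disjoint_Sets"
begin

definition simple_graph :: "'a set \<Rightarrow> ('a \<Rightarrow> 'a \<Rightarrow> bool) \<Rightarrow> bool" where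
  "simple_graph V E \<longleftrightarrow> finite V \<and>
     (\<forall>u v. E u v \<longrightarrow> u \<in> V \<and> v \<in> V \<and> u \<noteq> v \<and> E v u)"

definition degree :: "'a set \<Rightarrow> ('a \<Rightarrow> 'a \<Rightarrow> bool) \<Rightarrow> 'a \<Rightarrow> nat" where
  "degree V E v = card {u \<in> V. E v u}"

text \<open>Degree sequence in non-increasing order: d_1 \<ge> ... \<ge> d_n (0-indexed list).\<close>
definition degseq :: "'a set \<Rightarrow> ('a \<Rightarrow> 'a \<Rightarrow> bool) \<Rightarrow> nat list" where
  "degseq V E = rev (sorted_list_of_multiset (image_mset (degree V E) (mset_set V)))"

definition dk :: "'a set \<Rightarrow> ('a \<Rightarrow> 'a \<Rightarrow> bool) \<Rightarrow> nat \<Rightarrow> nat" where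
  "dk V E k = degseq V E ! (k - 1)"

definition y_G :: "'a set \<Rightarrow> ('a \<Rightarrow> 'a \<Rightarrow> bool) \<Rightarrow> real" where
  "y_G V E = (THE y. 1 \<le> y \<and> y \<le> real (card V) \<and>
     y * (y - 1) = (\<Sum>k = 1..nat \<lfloor>y\<rfloor>. real (dk V E k))
                   + (y - of_int \<lfloor>y\<rfloor>) * real (dk V E (nat \<lceil>y\<rceil>)))"

definition phi_G :: "'a set \<Rightarrow> ('a \<Rightarrow> 'a \<Rightarrow> bool) \<Rightarrow> nat" where
  "phi_G V E = (LEAST r. \<exists>P. partition_on V P \<and> card P = r \<and>
      (\<forall>A\<in>P. \<forall>v\<in>A. degree V E v \<le> card V - card A))"

end

theory Submission
  imports Defs
begin

text \<open>
  Let d_1 \<ge> ... \<ge> d_n be the degree sequence, y = y(G), and give the k-th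
  vertex of the sorted sequence the weight min 1 (max 0 (y - (k-1))), so that the first
  floor y vertices get weight 1, the next one the fractional part of y and all others 0.
  The weights lie in [0,1], sum to y, and the defining equation of y reads
  y(y-1) = sum_v d(v) w(v).  Take an optimal partition V_1,...,V_r (r = phi(G)) and let
  W_i be the weight of V_i.  Since d(v) \<le> n - n_i on V_i, we get
  sum_i n_i W_i \<le> y(n+1-y).  A purely numerical argument (isolate the smallest W_i,
  apply Cauchy-Schwarz to the others and complete a square) shows that this forces
  n/(n-y+1) < r + 1/3.
\<close>

section \<open>Fractional prefix sums of a non-increasing sequence\<close>

definition frac_weight :: "nat \<Rightarrow> real \<Rightarrow> real" where
  "frac_weight k y = min 1 (max 0 (y - real k))"

lemma frac_weight_bounds: "0 \<le> frac_weight k y" "frac_weight k y \<le> 1"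
  by (auto simp: frac_weight_def)

lemma sum_frac_weight:
  fixes d :: "nat \<Rightarrow> real"
  assumes y0: "0 \<le> y"
  shows "(\<Sum>k<N. d k * frac_weight k y) = (\<Sum>k<min N (nat \<lfloor>y\<rfloor>). d k)
          + (if nat \<lfloor>y\<rfloor> < N then (y - real (nat \<lfloor>y\<rfloor>)) * d (nat \<lfloor>y\<rfloor>) else 0)"
proof (induction N)
  case 0
  then show ?case by simp
next
  case (Suc N)
  define K where "K = nat \<lfloor>y\<rfloor>"
  have K: "real K \<le> y" "y < real K + 1"
    using y0 unfolding K_def by (auto simp: of_nat_nat)
  have split: "(\<Sum>k<Suc N. d k * frac_weight k y) = (\<Sum>k<N. d k * frac_weight k y) + d N * frac_weight N y"
    by simp
  consider "N < K" | "N = K" | "K < N" by linarith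
  then show ?case
  proof cases
    case 1
    then have "frac_weight N y = 1" "min (Suc N) K = Suc (min N K)"
      using K by (auto simp: frac_weight_def)
    then show ?thesis using Suc split 1 unfolding K_def[symmetric] by simp
  next
    case 2
    then have "frac_weight N y = y - real K" using K by (auto simp: frac_weight_def)
    then show ?thesis using Suc split 2 unfolding K_def[symmetric] by (simp add: mult.commute)
  next
    case 3
    then have "frac_weight N y = 0" using K by (auto simp: frac_weight_def)
    then show ?thesis using Suc split 3 unfolding K_def[symmetric] by simp
  qed
qed

lemma sum_frac_weight_total:
  assumes "0 \<le> y" "y \<le> real n"
  shows "(\<Sum>k<n. frac_weight k y) = y"
proof -
  have "nat \<lfloor>y\<rfloor> \<le> n"
    using floor_mono[OF assms(2)] by (simp add: nat_le_iff)
  moreover have "y = real n" if "\<not> nat \<lfloor>y\<rfloor> < n"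
  proof -
    have "real n = of_int \<lfloor>y\<rfloor>"
      using that \<open>nat \<lfloor>y\<rfloor> \<le> n\<close> assms(1) by (simp add: of_nat_nat[symmetric])
    then show ?thesis using assms(2) of_int_floor_le[of y] by simp
  qed
  ultimately show ?thesis
    using sum_frac_weight[OF assms(1), of "\<lambda>_. 1" n] assms by (auto simp: of_nat_nat)
qed

text \<open>The fractional prefix sum S_D(y) = sum_{k \<le> y} d_k (interpolated linearly).\<close>
definition prefix_sum :: "nat list \<Rightarrow> real \<Rightarrow> real" where
  "prefix_sum D y = (\<Sum>k<length D. real (D ! k) * frac_weight k y)"

lemma prefix_sum_nonneg: "0 \<le> prefix_sum D y"
  unfolding prefix_sum_def using frac_weight_bounds by (intro sum_nonneg) simp

lemma prefix_sum_continuous: "continuous_on A (prefix_sum D)"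
  unfolding prefix_sum_def frac_weight_def by (intro continuous_intros)

text \<open>prefix_sum agrees with the right-hand side in the definition of y(G).\<close>
lemma prefix_sum_eq_floor_form:
  assumes "1 \<le> y" "y \<le> real (length D)"
  shows "(\<Sum>k = 1..nat \<lfloor>y\<rfloor>. real (D ! (k - 1))) + (y - of_int \<lfloor>y\<rfloor>) * real (D ! (nat \<lceil>y\<rceil> - 1))
         = prefix_sum D y"
proof -
  define K where "K = nat \<lfloor>y\<rfloor>"
  have K: "real K \<le> y" "y < real K + 1" "of_int \<lfloor>y\<rfloor> = real K"
    using assms unfolding K_def by (auto simp: of_nat_nat)
  have K_le: "K \<le> length D"
    using floor_mono[OF assms(2)] unfolding K_def by (simp add: nat_le_iff)
  have "{1..K} = Suc ` {..<K}" by (simp add: image_Suc_lessThan)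
  then have shift: "(\<Sum>k = 1..K. real (D ! (k - 1))) = (\<Sum>k<K. real (D ! k))"
    by (simp add: sum.reindex)
  have "prefix_sum D y = (\<Sum>k<min (length D) K. real (D ! k))
          + (if K < length D then (y - real K) * real (D ! K) else 0)"
    unfolding prefix_sum_def K_def using assms by (intro sum_frac_weight) simp
  also have "\<dots> = (\<Sum>k = 1..K. real (D ! (k - 1))) + (y - of_int \<lfloor>y\<rfloor>) * real (D ! (nat \<lceil>y\<rceil> - 1))"
  proof (cases "y = real K")
    case True
    then show ?thesis using shift K_le K by (simp add: min_absorb2)
  next
    case False
    then have "K < length D" "\<lceil>y\<rceil> = int K + 1"
      using K_le assms K by (auto simp: ceiling_eq_iff)
    then have "K < length D" "nat \<lceil>y\<rceil> = K + 1" by simp_all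
    then show ?thesis using shift K by (simp add: min_absorb2)
  qed
  finally show ?thesis unfolding K_def by simp
qed

lemma prefix_sum_ratio_mono:
  assumes sorted: "\<And>i j. i \<le> j \<Longrightarrow> j < length D \<Longrightarrow> D ! j \<le> D ! i"
    and y1: "0 < y1" and y12: "y1 \<le> y2" and y2: "y2 \<le> real (length D)"
  shows "y1 * prefix_sum D y2 \<le> y2 * prefix_sum D y1"
proof (cases "y1 = y2")
  case True
  then show ?thesis by simp
next
  case False
  define n where "n = length D"
  define t where "t = nat \<lfloor>y1\<rfloor>"
  define d where "d k = real (D ! k)" for k
  define g where "g k = y1 * frac_weight k y2 - y2 * frac_weight k y1" for k
  have t: "real t \<le> y1" "y1 < real t + 1"
    using y1 unfolding t_def by (auto simp: of_nat_nat)
  have "t < n" using t False y12 y2 n_def by linarith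
  \<comment> \<open>g sums to 0, and for every k the signs of g k and d k - d t are opposite:
     below t we have g k \<le> 0 \<le> d k - d t, above t we have d k - d t \<le> 0 \<le> g k.\<close>
  have g_sum: "(\<Sum>k<n. g k) = 0"
    using sum_frac_weight_total[of y1 n] sum_frac_weight_total[of y2 n] y1 y12 y2 n_def
    by (simp add: g_def sum_subtractf sum_distrib_left[symmetric])
  have "y1 * prefix_sum D y2 - y2 * prefix_sum D y1 = (\<Sum>k<n. d k * g k)"
    by (simp add: prefix_sum_def n_def d_def g_def sum_distrib_left sum_subtractf[symmetric]
        algebra_simps)
  also have "\<dots> = (\<Sum>k<n. (d k - d t) * g k) + d t * (\<Sum>k<n. g k)"
    by (simp add: sum_distrib_left sum_subtractf left_diff_distrib)
  also have "\<dots> \<le> 0"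
  proof -
    have "(d k - d t) * g k \<le> 0" if k: "k < n" for k
    proof -
      consider "k < t" | "k = t" | "t < k" by linarith
      then show ?thesis
      proof cases
        case 1
        then have "d t \<le> d k" "frac_weight k y1 = 1"
          using sorted \<open>t < n\<close> t n_def d_def by (auto simp: frac_weight_def)
        moreover have "y1 * frac_weight k y2 \<le> y1"
          using y1 frac_weight_bounds(2)[of k y2] by simp
        ultimately show ?thesis using y12 by (simp add: g_def mult_nonneg_nonpos)
      next
        case 3
        then have "d k \<le> d t" "frac_weight k y1 = 0"
          using sorted k t n_def d_def by (auto simp: frac_weight_def)
        moreover have "0 \<le> y1 * frac_weight k y2"
          using y1 frac_weight_bounds(1)[of k y2] by simp
        ultimately show ?thesis by (simp add: g_def mult_nonpos_nonneg)
      qed simp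
    qed
    then show ?thesis using g_sum by (auto intro: sum_nonpos)
  qed
  finally show ?thesis by simp
qed

text \<open>The equation y(y-1) = S_D(y) has exactly one solution in [1, n]: it exists by the
  intermediate value theorem (using d_k \<le> n-1), and it is unique because y - 1 increases
  while S_D(y)/y does not.\<close>
lemma prefix_sum_equation_unique:
  assumes sorted: "\<And>i j. i \<le> j \<Longrightarrow> j < length D \<Longrightarrow> D ! j \<le> D ! i"
    and bound: "\<And>k. k < length D \<Longrightarrow> real (D ! k) \<le> real (length D) - 1"
    and nonempty: "D \<noteq> []"
  shows "\<exists>!y. 1 \<le> y \<and> y \<le> real (length D) \<and> y * (y - 1) = prefix_sum D y"
proof -
  define n where "n = length D"
  define f where "f y = y * (y - 1) - prefix_sum D y" for y
  have "f 1 \<le> 0" using prefix_sum_nonneg[of D 1] by (simp add: f_def)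
  have "prefix_sum D (real n) = (\<Sum>k<n. real (D ! k))"
    unfolding prefix_sum_def n_def by (intro sum.cong) (auto simp: frac_weight_def)
  also have "\<dots> \<le> (\<Sum>k<n. real n - 1)"
    using bound n_def by (intro sum_mono) auto
  finally have "0 \<le> f (real n)" by (simp add: f_def)
  moreover have "continuous_on {1..real n} f"
    unfolding f_def using prefix_sum_continuous by (intro continuous_intros)
  moreover have "1 \<le> real n" using nonempty n_def by (cases D) auto
  ultimately obtain y where y: "1 \<le> y" "y \<le> real n" "f y = 0"
    using IVT'[of f 1 0 "real n"] \<open>f 1 \<le> 0\<close> by auto
  have no_two: False
    if a: "1 \<le> a" "a * (a - 1) = prefix_sum D a" and b: "b \<le> real n" "b * (b - 1) = prefix_sum D b"
      and "a < b" for a b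
  proof -
    have "a * prefix_sum D b \<le> b * prefix_sum D a"
      using prefix_sum_ratio_mono[OF sorted, of a b] a b \<open>a < b\<close> n_def by simp
    then have "a * (b * (b - 1)) \<le> b * (a * (a - 1))" using a b by simp
    then have "a * b * b \<le> a * b * a" by (simp add: algebra_simps)
    then show False using a \<open>a < b\<close> by simp
  qed
  show ?thesis
  proof (rule ex1I[of _ y])
    show "1 \<le> y \<and> y \<le> real (length D) \<and> y * (y - 1) = prefix_sum D y"
      using y n_def f_def by simp
    fix z assume "1 \<le> z \<and> z \<le> real (length D) \<and> z * (z - 1) = prefix_sum D z"
    then show "z = y"
      using no_two[of z y] no_two[of y z] y f_def n_def by (smt (verit))
  qed
qed

section \<open>Degrees, the number y(G) and optimal partitions\<close>

lemma degree_le_card: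
  assumes "simple_graph V E" "v \<in> V"
  shows "degree V E v \<le> card V - 1"
proof -
  have "{u \<in> V. E v u} \<subseteq> V - {v}" using assms by (auto simp: simple_graph_def)
  then have "card {u \<in> V. E v u} \<le> card (V - {v})"
    using assms by (intro card_mono) (auto simp: simple_graph_def)
  then show ?thesis using assms by (simp add: degree_def)
qed

lemma degseq_enumeration:
  assumes "finite V"
  obtains vs where "distinct vs" "set vs = V" "degseq V E = map (degree V E) vs"
proof -
  obtain ws where ws: "distinct ws" "set ws = V" using finite_distinct_list[OF assms] by blast
  define vs where "vs = rev (sort_key (degree V E) ws)"
  have "sort (map (degree V E) ws) = map (degree V E) (sort_key (degree V E) ws)"
    by (rule properties_for_sort) (simp_all add: mset_map)
  moreover have "image_mset (degree V E) (mset_set V) = mset (map (degree V E) ws)"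
    using ws mset_set_set[OF ws(1)] by (simp add: mset_map)
  ultimately have "degseq V E = map (degree V E) vs"
    unfolding degseq_def vs_def by (simp only: sorted_list_of_multiset_mset rev_map)
  moreover have "distinct vs" "set vs = V" using ws by (simp_all add: vs_def)
  ultimately show ?thesis using that by blast
qed

lemma degseq_length:
  assumes "finite V"
  shows "length (degseq V E) = card V"
  by (metis assms degseq_enumeration distinct_card length_map)

lemma degseq_sorted:
  assumes "i \<le> j" "j < length (degseq V E)"
  shows "degseq V E ! j \<le> degseq V E ! i"
proof -
  define L where "L = sorted_list_of_multiset (image_mset (degree V E) (mset_set V))"
  have D: "degseq V E = rev L" by (simp add: degseq_def L_def)
  have "L ! (length L - Suc j) \<le> L ! (length L - Suc i)"
    using assms D by (intro sorted_nth_mono) (auto simp: L_def)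
  then show ?thesis using assms D by (simp add: rev_nth)
qed

lemma degseq_bound:
  assumes "simple_graph V E" "k < length (degseq V E)"
  shows "real (degseq V E ! k) \<le> real (length (degseq V E)) - 1"
proof -
  have fin: "finite V" using assms(1) by (simp add: simple_graph_def)
  obtain vs where vs: "distinct vs" "set vs = V" "degseq V E = map (degree V E) vs"
    using degseq_enumeration[OF fin] .
  then have "degseq V E ! k \<le> card V - 1"
    using assms degree_le_card[OF assms(1), of "vs ! k"] by auto
  moreover have "length (degseq V E) = card V" "card V \<ge> 1"
    using degseq_length[OF fin] assms(2) by auto
  ultimately show ?thesis by linarith
qed

lemma y_G_equation:
  assumes G: "simple_graph V E" and ne: "V \<noteq> {}"
  shows "1 \<le> y_G V E" "y_G V E \<le> real (card V)"
    and "y_G V E * (y_G V E - 1) = prefix_sum (degseq V E) (y_G V E)"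
proof -
  define D where "D = degseq V E"
  have len: "length D = card V"
    using G by (simp add: D_def degseq_length simple_graph_def)
  then have "D \<noteq> []" using G ne by (auto simp: simple_graph_def)
  define Q where "Q y = (1 \<le> y \<and> y \<le> real (card V) \<and> y * (y - 1) = prefix_sum D y)" for y
  have "y_G V E = (THE y. Q y)"
    unfolding y_G_def Q_def
    using prefix_sum_eq_floor_form[of _ D] len by (intro arg_cong[where f = The]) (auto simp: dk_def D_def)
  moreover have "\<exists>!y. Q y"
    using prefix_sum_equation_unique degseq_sorted degseq_bound[OF G] \<open>D \<noteq> []\<close>
    unfolding Q_def len[symmetric] D_def by blast
  ultimately have "Q (y_G V E)" using theI' by metis
  then show "1 \<le> y_G V E" "y_G V E \<le> real (card V)"
    and "y_G V E * (y_G V E - 1) = prefix_sum (degseq V E) (y_G V E)"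
    by (simp_all add: Q_def D_def)
qed

lemma vertex_weighting:
  assumes fin: "finite V" and y: "0 \<le> y" "y \<le> real (card V)"
  obtains w where "\<And>v. 0 \<le> w v" "\<And>v. w v \<le> 1" "(\<Sum>v\<in>V. w v) = y"
    "prefix_sum (degseq V E) y = (\<Sum>v\<in>V. real (degree V E v) * w v)"
proof -
  obtain vs where vs: "distinct vs" "set vs = V" "degseq V E = map (degree V E) vs"
    using degseq_enumeration[OF fin] .
  define n where "n = card V"
  have len: "length vs = n" using vs n_def distinct_card by fastforce
  have bij: "bij_betw ((!) vs) {..<n} V" by (rule bij_betw_nth[OF vs(1)]) (simp_all add: len vs(2))
  define w where "w v = frac_weight (inv_into {..<n} ((!) vs) v) y" for v
  have w_nth: "w (vs ! k) = frac_weight k y" if "k < n" for k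
    using inv_into_f_f[OF bij_betw_imp_inj_on[OF bij], of k] that by (simp add: w_def)
  show ?thesis
  proof (rule that[of w])
    show "0 \<le> w v" "w v \<le> 1" for v
      unfolding w_def by (rule frac_weight_bounds)+
    have "(\<Sum>v\<in>V. w v) = (\<Sum>k<n. w (vs ! k))"
      by (rule sum.reindex_bij_betw[OF bij, symmetric])
    also have "\<dots> = (\<Sum>k<n. frac_weight k y)" using w_nth by simp
    also have "\<dots> = y" unfolding n_def by (rule sum_frac_weight_total[OF y])
    finally show "(\<Sum>v\<in>V. w v) = y" .
    have "prefix_sum (degseq V E) y = (\<Sum>k<n. real (degree V E (vs ! k)) * w (vs ! k))"
      unfolding prefix_sum_def using vs(3) len w_nth by (intro sum.cong) auto
    also have "\<dots> = (\<Sum>v\<in>V. real (degree V E v) * w v)"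
      by (rule sum.reindex_bij_betw[OF bij])
    finally show "prefix_sum (degseq V E) y = (\<Sum>v\<in>V. real (degree V E v) * w v)" .
  qed
qed

text \<open>phi(G) is attained: the partition into singletons is admissible.\<close>
lemma phi_G_partition:
  assumes G: "simple_graph V E"
  obtains P where "partition_on V P" "card P = phi_G V E"
    "\<And>A v. A \<in> P \<Longrightarrow> v \<in> A \<Longrightarrow> degree V E v \<le> card V - card A"
proof -
  define admissible where "admissible r = (\<exists>P. partition_on V P \<and> card P = r \<and>
      (\<forall>A\<in>P. \<forall>v\<in>A. degree V E v \<le> card V - card A))" for r
  have "admissible (card ((\<lambda>x. {x}) ` V))"
    unfolding admissible_def
  proof (intro exI conjI ballI)
    show "partition_on V ((\<lambda>x. {x}) ` V)" by (rule partition_on_singletons)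
    fix A v assume "A \<in> (\<lambda>x. {x}) ` V" "v \<in> A"
    then have "A = {v}" "v \<in> V" by auto
    then show "degree V E v \<le> card V - card A" using degree_le_card[OF G] by simp
  qed simp
  then have "admissible (phi_G V E)"
    unfolding phi_G_def admissible_def[symmetric] by (rule LeastI)
  then obtain P where "partition_on V P" "card P = phi_G V E"
    "\<forall>A\<in>P. \<forall>v\<in>A. degree V E v \<le> card V - card A"
    unfolding admissible_def by blast
  then show ?thesis using that by blast
qed

lemma partition_weight_inequality:
  fixes d w :: "'a \<Rightarrow> real"
  assumes fin: "finite V" and P: "partition_on V P"
    and deg: "\<And>A v. A \<in> P \<Longrightarrow> v \<in> A \<Longrightarrow> d v \<le> real (card V) - real (card A)"
    and w0: "\<And>v. 0 \<le> w v" and total: "(\<Sum>v\<in>V. w v) = y"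
    and eq: "y * (y - 1) = (\<Sum>v\<in>V. d v * w v)"
  shows "(\<Sum>A\<in>P. real (card A) * (\<Sum>v\<in>A. w v)) \<le> y * (real (card V) + 1 - y)"
proof -
  define n where "n = real (card V)"
  have "y * (y - 1) = (\<Sum>A\<in>P. \<Sum>v\<in>A. d v * w v)"
    using eq sum.partition[OF fin P] by simp
  also have "\<dots> \<le> (\<Sum>A\<in>P. \<Sum>v\<in>A. (n - real (card A)) * w v)"
    using deg w0 unfolding n_def by (intro sum_mono mult_right_mono) auto
  also have "\<dots> = (\<Sum>A\<in>P. n * (\<Sum>v\<in>A. w v)) - (\<Sum>A\<in>P. real (card A) * (\<Sum>v\<in>A. w v))"
    by (simp add: sum_distrib_left left_diff_distrib sum_subtractf)
  also have "(\<Sum>A\<in>P. n * (\<Sum>v\<in>A. w v)) = n * y"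
    using sum.partition[OF fin P, of w] total by (simp add: sum_distrib_left[symmetric])
  finally show ?thesis unfolding n_def by (simp add: algebra_simps)
qed

section \<open>The numerical inequality\<close>

text \<open>Cauchy-Schwarz in the form sum f^2 \<ge> (sum f)^2 / |Q|, via the tangent-line bound
  f^2 \<ge> 2 c f - c^2 at the mean c.\<close>
lemma sum_squares_ge_mean:
  fixes f :: "'b \<Rightarrow> real"
  assumes "finite Q" "Q \<noteq> {}"
  shows "(sum f Q)^2 / real (card Q) \<le> (\<Sum>x\<in>Q. (f x)^2)"
proof -
  define c where "c = sum f Q / real (card Q)"
  have card: "real (card Q) > 0" using assms by (simp add: card_gt_0_iff)
  have "(sum f Q)^2 / real (card Q) = 2 * c * sum f Q - real (card Q) * c^2"
    using card by (simp add: c_def power2_eq_square field_simps)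
  also have "\<dots> = (\<Sum>x\<in>Q. 2 * c * f x - c^2)"
    by (simp add: sum_subtractf sum_distrib_left)
  also have "\<dots> \<le> (\<Sum>x\<in>Q. (f x)^2)"
  proof (rule sum_mono)
    fix x
    have "0 \<le> (f x - c)^2" by simp
    then show "2 * c * f x - c^2 \<le> (f x)^2" by (simp add: power2_eq_square algebra_simps)
  qed
  finally show ?thesis .
qed

text \<open>For R \<ge> 1, x \<ge> 0, y \<ge> 1 the quadratic condition below
  (which will come from isolating a smallest part weight m) forces 3(y+x) < (3R+4)(x+1).
  It rests on the identity
  4(R+1) (R m^2 + (y-m)^2 + R x m - R y (x+1))
    = (2(R+1) m - (2y - R x))^2 + R (4 y (y - 1 - R(x+1)) - R x^2).\<close>
lemma quadratic_condition_bound: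
  fixes R x y m :: real
  assumes R: "R \<ge> 1" and x: "x \<ge> 0" and y: "y \<ge> 1"
    and H: "R * m^2 + (y - m)^2 + R * x * m \<le> R * y * (x + 1)"
  shows "3 * (y + x) < (3 * R + 4) * (x + 1)"
proof (rule ccontr)
  assume "\<not> ?thesis"
  then have gap3: "x + 1 \<le> 3 * (y - 1 - R * (x + 1))" by (simp add: algebra_simps)
  then have gap: "(x + 1) / 3 \<le> y - 1 - R * (x + 1)" by simp
  have "R * (x + 1) \<le> y" using gap3 x by (simp add: algebra_simps)
  then have "4 * (R * (x + 1)) * ((x + 1) / 3) \<le> 4 * y * (y - 1 - R * (x + 1))"
    using gap x y R by (intro mult_mono) auto
  moreover have "R * x^2 < 4 * (R * (x + 1)) * ((x + 1) / 3)"
  proof -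
    have "x^2 < (x + 1)^2" using x by (simp add: power2_eq_square algebra_simps)
    then have "x^2 < 4 / 3 * (x + 1)^2" using zero_le_power2[of "x + 1"] by linarith
    then have "R * x^2 < R * (4 / 3 * (x + 1)^2)" using R by simp
    also have "\<dots> = 4 * (R * (x + 1)) * ((x + 1) / 3)" by (simp add: power2_eq_square)
    finally show ?thesis .
  qed
  ultimately have "R * x^2 < 4 * y * (y - 1 - R * (x + 1))" by linarith
  then have pos: "0 < R * (4 * y * (y - 1 - R * (x + 1)) - R * x^2)"
    using R by simp
  have "4 * (R + 1) * (R * m^2 + (y - m)^2 + R * x * m - R * y * (x + 1))
      = (2 * (R + 1) * m - (2 * y - R * x))^2 + R * (4 * y * (y - 1 - R * (x + 1)) - R * x^2)"
    by (simp add: algebra_simps power2_eq_square)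
  also have "\<dots> > 0" using pos by (simp add: add_nonneg_pos)
  finally have "0 < R * m^2 + (y - m)^2 + R * x * m - R * y * (x + 1)"
    using R by (simp add: zero_less_mult_iff)
  with H show False by simp
qed

text \<open>If sum N A * W A \<le> y(n+1-y), then
  n/(n-y+1) < |P| + 1/3.  Write sum N W = sum W^2 + sum W (N - W); the second sum is at
  least m (n - y) for the smallest weight m, and Cauchy-Schwarz bounds sum W^2 from below
  by m^2 + (y-m)^2/(|P|-1).\<close>
lemma partition_ratio_bound:
  fixes P :: "'b set" and W N :: "'b \<Rightarrow> real" and y n :: real
  assumes fin: "finite P" and ne: "P \<noteq> {}"
    and W0: "\<And>A. A \<in> P \<Longrightarrow> 0 \<le> W A" and WN: "\<And>A. A \<in> P \<Longrightarrow> W A \<le> N A"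
    and sW: "sum W P = y" and sN: "sum N P = n"
    and ineq: "(\<Sum>A\<in>P. N A * W A) \<le> y * (n + 1 - y)" and y1: "1 \<le> y" and yn: "y \<le> n"
  shows "n / (n - y + 1) < real (card P) + 1/3"
proof -
  define x where "x = n - y"
  have x0: "0 \<le> x" using yn by (simp add: x_def)
  obtain j where j: "j \<in> P" "\<And>A. A \<in> P \<Longrightarrow> W j \<le> W A"
    using ex_is_arg_min_if_finite[OF fin ne, of W] by (auto simp: is_arg_min_linorder)
  define m where "m = W j"
  have "(\<Sum>A\<in>P. m * (N A - W A)) \<le> (\<Sum>A\<in>P. W A * (N A - W A))"
    using j WN by (intro sum_mono mult_right_mono) (auto simp: m_def)
  moreover have "(\<Sum>A\<in>P. m * (N A - W A)) = m * x"
    by (simp add: sum_distrib_left[symmetric] sum_subtractf sW sN x_def)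
  moreover have "y * (n + 1 - y) = y * (x + 1)" by (simp add: x_def)
  moreover have "(\<Sum>A\<in>P. N A * W A) = (\<Sum>A\<in>P. (W A)^2) + (\<Sum>A\<in>P. W A * (N A - W A))"
    by (simp add: sum.distrib[symmetric] algebra_simps power2_eq_square)
  ultimately have main: "(\<Sum>A\<in>P. (W A)^2) + m * x \<le> y * (x + 1)"
    using ineq \<open>y * (n + 1 - y) = y * (x + 1)\<close> by linarith
  show ?thesis
  proof (cases "P = {j}")
    case True
    then have "y * y \<le> y" using main sW sN W0 x_def by (simp add: algebra_simps power2_eq_square m_def)
    then have "y = 1" using y1 by simp
    moreover have "1 \<le> card P" using fin ne by (simp add: Suc_le_eq card_gt_0_iff)
    ultimately show ?thesis using yn by simp
  next
    case False
    define R where "R = real (card P) - 1"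
    have rest_ne: "P - {j} \<noteq> {}" using False j(1) by auto
    have card_rest: "real (card (P - {j})) = R"
      using fin j(1) card_gt_0_iff[of P] by (auto simp: R_def of_nat_diff Suc_le_eq)
    have "0 < card (P - {j})" using rest_ne fin by (simp add: card_gt_0_iff)
    then have R1: "1 \<le> R" using card_rest by linarith
    have "sum W (P - {j}) = y - m" using sW fin j(1) by (simp add: sum.remove m_def)
    then have "m^2 + (y - m)^2 / R \<le> (\<Sum>A\<in>P. (W A)^2)"
      using sum_squares_ge_mean[OF _ rest_ne, of W] card_rest j(1) fin
      by (simp add: sum.remove m_def)
    then have "R * m^2 + (y - m)^2 \<le> R * (\<Sum>A\<in>P. (W A)^2)"
      using R1 by (simp add: field_simps)
    moreover have "R * ((\<Sum>A\<in>P. (W A)^2) + m * x) \<le> R * (y * (x + 1))"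
      using main R1 by (intro mult_left_mono) auto
    ultimately have "R * m^2 + (y - m)^2 + R * x * m \<le> R * y * (x + 1)"
      by (simp add: algebra_simps)
    then have "3 * (y + x) < (3 * R + 4) * (x + 1)"
      by (rule quadratic_condition_bound[OF R1 x0 y1])
    then show ?thesis
      using yn by (simp add: R_def x_def field_simps)
  qed
qed

lemma weighted_partition_ratio_bound:
  fixes d w :: "'a \<Rightarrow> real"
  assumes fin: "finite V" and ne: "V \<noteq> {}" and P: "partition_on V P"
    and deg: "\<And>A v. A \<in> P \<Longrightarrow> v \<in> A \<Longrightarrow> d v \<le> real (card V) - real (card A)"
    and w0: "\<And>v. 0 \<le> w v" and w1: "\<And>v. w v \<le> 1" and total: "(\<Sum>v\<in>V. w v) = y"
    and eq: "y * (y - 1) = (\<Sum>v\<in>V. d v * w v)" and y: "1 \<le> y" "y \<le> real (card V)"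
  shows "real (card V) / (real (card V) - y + 1) < real (card P) + 1/3"
proof (rule partition_ratio_bound[where W = "\<lambda>A. \<Sum>v\<in>A. w v" and N = "\<lambda>A. real (card A)"])
  show "finite P" "P \<noteq> {}" using finite_elements[OF fin P] P ne by (auto simp: partition_on_def)
  show "(\<Sum>A\<in>P. real (card A) * (\<Sum>v\<in>A. w v)) \<le> y * (real (card V) + 1 - y)"
    by (rule partition_weight_inequality[OF fin P deg w0 total eq])
  show "(\<Sum>A\<in>P. \<Sum>v\<in>A. w v) = y"
    using sum.partition[OF fin P, of w] total by simp
  have "\<And>A. A \<in> P \<Longrightarrow> finite A"
    using fin P by (auto simp: partition_on_def intro: finite_subset)
  then have "card V = sum card P" by (rule product_partition[OF P])
  then show "(\<Sum>A\<in>P. real (card A)) = real (card V)" by simp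
  show "(\<Sum>v\<in>A. w v) \<le> real (card A)" for A
    using sum_mono[of A w "\<lambda>_. 1"] w1 by simp
qed (use w0 y in \<open>auto intro: sum_nonneg\<close>)

theorem theorem11:
  fixes V :: "'a set" and E :: "'a \<Rightarrow> 'a \<Rightarrow> bool"
  assumes "simple_graph V E" and "V \<noteq> {}"
  shows "real (card V) / (real (card V) - y_G V E + 1) < real (phi_G V E) + 1/3"
proof -
  have fin: "finite V" using assms(1) by (simp add: simple_graph_def)
  note y = y_G_equation[OF assms]
  obtain w where w: "\<And>v. 0 \<le> w v" "\<And>v. w v \<le> 1" "(\<Sum>v\<in>V. w v) = y_G V E"
    and degsum: "prefix_sum (degseq V E) (y_G V E) = (\<Sum>v\<in>V. real (degree V E v) * w v)"
    using vertex_weighting[OF fin, of "y_G V E" E] y(1,2) by auto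
  obtain P where P: "partition_on V P" "card P = phi_G V E"
    and deg: "\<And>A v. A \<in> P \<Longrightarrow> v \<in> A \<Longrightarrow> degree V E v \<le> card V - card A"
    using phi_G_partition[OF assms(1)] by blast
  have "real (degree V E v) \<le> real (card V) - real (card A)" if "A \<in> P" "v \<in> A" for A v
  proof -
    have "card A \<le> card V" using P(1) that(1) fin by (intro card_mono) (auto simp: partition_on_def)
    then show ?thesis using deg[OF that] by (simp add: of_nat_diff)
  qed
  from weighted_partition_ratio_bound[OF fin assms(2) P(1) this w] y degsum
  show ?thesis unfolding P(2) by simp
qed

end
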